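(* Let $X\in\{0,1\}^{n\times m}$ and $X'\in\{0,1\}^{n\times m}$ be independent, each following the rank-one model with the same column parameter $\mathbf v\in[c,C]^m$ and row parameters $\mathbf u\in[c,C]^n$ and $\mathbf u'\in[c,C]^n$ respectively. Let $\hat{\mathbf v}$ be a leading right singular vector of $X'$ (sign chosen so that $\langle\hat{\mathbf v},\mathbf v\rangle\ge0$) and set $\hat u_i=X_{i,\cdot}\,\hat{\mathbf v}/(\|\hat{\mathbf v}\|\,\|\mathbf v\|)$, where $X_{i,\cdot}$ is the $i$-th row of $X$. Then for every $i$ and every $0<\epsilon<1$ satisfying $\epsilon^2\min(m,n)>(6C_3/c)^2\log(m+n)$, $$\Pr\big(|\hat u_i-u_i|>\epsilon\big)\le (m+n+2)\exp\!\left(-C_4\min(m,n)\,\epsilon^2\right).$$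
   Context: Rank-one model: fix constants $0<c<C<1$. For vectors $\mathbf u\in[c,C]^n$ and $\mathbf v\in[c,C]^m$, a random matrix $X\in\{0,1\}^{n\times m}$ follows the rank-one model if its entries are independent with $X_{i,j}\sim\mathrm{Bernoulli}(u_iv_j)$, so $\mathbb E X=\mathbf u\mathbf v^\top$. All norms are Euclidean. Constants: $C_2=c^4/48$, $C_3=4/c^4+30\sqrt2$, $C_4=c^2\min(1/18,\,C_2/9)$. *)

theory Defs
  imports "HOL-Probability.Probability"
begin

text \<open>Matrices in {0,1}^{n x m} are represented as functions (nat \<times> nat) \<Rightarrow> bool,
  equal to False outside {0..<n} \<times> {0..<m}; real vectors in R^m as nat \<Rightarrow> real,
  only the entries with index < m being relevant.\<close>

definition const_C2 :: "real \<Rightarrow> real" where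
  "const_C2 c = c ^ 4 / 48"

definition const_C3 :: "real \<Rightarrow> real" where
  "const_C3 c = 4 / c ^ 4 + 30 * sqrt 2"

definition const_C4 :: "real \<Rightarrow> real" where
  "const_C4 c = c ^ 2 * min (1 / 18) (const_C2 c / 9)"

definition rank_one_pmf :: "nat \<Rightarrow> nat \<Rightarrow> (nat \<Rightarrow> real) \<Rightarrow> (nat \<Rightarrow> real) \<Rightarrow> (nat \<times> nat \<Rightarrow> bool) pmf" where
  "rank_one_pmf n m u v = Pi_pmf ({0..<n} \<times> {0..<m}) False (\<lambda>(i, j). bernoulli_pmf (u i * v j))"

definition vec_inner :: "nat \<Rightarrow> (nat \<Rightarrow> real) \<Rightarrow> (nat \<Rightarrow> real) \<Rightarrow> real" where
  "vec_inner m a b = (\<Sum>j<m. a j * b j)"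

definition vec_norm :: "nat \<Rightarrow> (nat \<Rightarrow> real) \<Rightarrow> real" where
  "vec_norm m a = sqrt (\<Sum>j<m. (a j)\<^sup>2)"

definition gram_mult :: "nat \<Rightarrow> nat \<Rightarrow> (nat \<Rightarrow> nat \<Rightarrow> real) \<Rightarrow> (nat \<Rightarrow> real) \<Rightarrow> nat \<Rightarrow> real" where
  "gram_mult n m A y = (\<lambda>j. \<Sum>i<n. A i j * (\<Sum>k<m. A i k * y k))"

text \<open>w is a leading right singular vector of A: a (nonzero) eigenvector of A^T A
  for its largest eigenvalue sigma_1(A)^2.\<close>
definition leading_right_sv :: "nat \<Rightarrow> nat \<Rightarrow> (nat \<Rightarrow> nat \<Rightarrow> real) \<Rightarrow> (nat \<Rightarrow> real) \<Rightarrow> bool" where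
  "leading_right_sv n m A w \<longleftrightarrow>
     (\<exists>j<m. w j \<noteq> 0) \<and>
     (\<exists>lam. (\<forall>j<m. gram_mult n m A w j = lam * w j) \<and>
          (\<forall>\<mu> y. (\<exists>j<m. y j \<noteq> 0) \<and> (\<forall>j<m. gram_mult n m A y j = \<mu> * y j) \<longrightarrow> \<mu> \<le> lam))"

definition real_mat :: "(nat \<times> nat \<Rightarrow> bool) \<Rightarrow> nat \<Rightarrow> nat \<Rightarrow> real" where
  "real_mat X = (\<lambda>i j. of_bool (X (i, j)))"

end

theory Submission
  imports Defs
begin

(* Write r_j = X_{i,j} and w = vhat X'. The estimate splits as
     uhat_i - u_i = R / (|w| |v|) - u_i (1 - <w,v> / (|w| |v|)),   R = sum_j (r_j - u_i v_j) w_j.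
   The second matrix is X' = u' v^T + F with F centred and entrywise bounded.  Whenever the operator
   norm of F is at most eps |u'| |v| / 4, the leading right singular vector w of X' satisfies
   <w,v> >= (1 - eps/2) |w| |v|, because |X' y| is within |F| |y| of |u'| |<v,y>| and w maximizes
   |X' y| / |y|.  By Hoeffding's inequality on a grid of mesh ~ eps c^2 / sqrt(m + n) and a union bound,
   this operator norm bound fails with probability at most (m + n) exp(-C4 min(m,n) eps^2).  On the
   complementary event a deviation |uhat_i - u_i| > eps forces |R| >= eps |w| |v| / 2; as X is
   independent of X', R is, for fixed X', a weighted sum of independent centred Bernoulli variables,
   and Hoeffding's inequality bounds this probability by 2 exp(-C4 min(m,n) eps^2). *)

section \<open>Vectors and matrices indexed by natural numbers\<close>

lemma vec_norm_eq_L2_set: "vec_norm m a = L2_set a {..<m}"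
  by (simp add: vec_norm_def L2_set_def)

lemma vec_norm_nonneg: "vec_norm m a \<ge> 0"
  by (simp add: vec_norm_def sum_nonneg)

lemma vec_norm_power2: "(vec_norm m a)\<^sup>2 = (\<Sum>j<m. (a j)\<^sup>2)"
  by (simp add: vec_norm_def sum_nonneg)

lemma vec_norm_eq_0_iff: "vec_norm m a = 0 \<longleftrightarrow> (\<forall>j<m. a j = 0)"
  unfolding vec_norm_eq_L2_set by (subst L2_set_eq_0_iff) auto

lemma abs_le_vec_norm: "j < m \<Longrightarrow> \<bar>a j\<bar> \<le> vec_norm m a"
  unfolding vec_norm_def by (rule real_le_rsqrt) (auto intro: member_le_sum)

lemma vec_norm_triangle: "vec_norm m (\<lambda>j. a j + b j) \<le> vec_norm m a + vec_norm m b"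
  unfolding vec_norm_eq_L2_set by (rule L2_set_triangle_ineq)

lemma vec_norm_scale: "vec_norm m (\<lambda>j. s * a j) = \<bar>s\<bar> * vec_norm m a"
  unfolding vec_norm_eq_L2_set using L2_set_right_distrib[of "\<bar>s\<bar>" a "{..<m}"]
  by (simp add: L2_set_def power_mult_distrib)

lemma vec_norm_le_add_diff: "vec_norm m b \<le> vec_norm m a + vec_norm m (\<lambda>j. a j - b j)"
proof -
  have "vec_norm m b = vec_norm m (\<lambda>j. a j + (-1) * (a j - b j))" by simp
  also have "\<dots> \<le> vec_norm m a + vec_norm m (\<lambda>j. a j - b j)"
    using vec_norm_triangle[of m a "\<lambda>j. (-1) * (a j - b j)"] by (simp only: vec_norm_scale)
  finally show ?thesis .
qed

lemma vec_norm_diff_commute: "vec_norm m (\<lambda>j. a j - b j) = vec_norm m (\<lambda>j. b j - a j)"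
  using vec_norm_scale[of m "-1" "\<lambda>j. a j - b j"] by simp

lemma abs_vec_norm_diff_le: "\<bar>vec_norm m a - vec_norm m b\<bar> \<le> vec_norm m (\<lambda>j. a j - b j)"
  using vec_norm_le_add_diff[of m a b] vec_norm_le_add_diff[of m b a] vec_norm_diff_commute[of m a b]
  by linarith

lemma vec_inner_le_norm_mult: "vec_inner m a b \<le> vec_norm m a * vec_norm m b"
proof -
  have "vec_inner m a b \<le> (\<Sum>j<m. \<bar>a j\<bar> * \<bar>b j\<bar>)"
    unfolding vec_inner_def by (intro sum_mono) (simp add: abs_mult[symmetric])
  also have "\<dots> \<le> vec_norm m a * vec_norm m b"
    unfolding vec_norm_eq_L2_set by (rule L2_set_mult_ineq)
  finally show ?thesis .
qed

lemma sum_abs_le_sqrt_mult_vec_norm: "(\<Sum>j<m. \<bar>x j\<bar>) \<le> sqrt (real m) * vec_norm m x"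
  using L2_set_mult_ineq[where f="\<lambda>_. 1::real" and A="{..<m}" and g=x]
  by (simp add: L2_set_constant vec_norm_eq_L2_set)

lemma vec_norm_ge_of_entries_ge:
  assumes "0 \<le> c" "\<forall>k<n. c \<le> u k"
  shows "c * sqrt (real n) \<le> vec_norm n u"
proof -
  have "(\<Sum>k<n. c\<^sup>2) \<le> (\<Sum>k<n. (u k)\<^sup>2)"
    using assms by (intro sum_mono power_mono) auto
  then have "(c * sqrt (real n))\<^sup>2 \<le> (vec_norm n u)\<^sup>2"
    by (simp add: vec_norm_power2 power_mult_distrib mult.commute)
  then show ?thesis by (rule power2_le_imp_le) (simp add: vec_norm_nonneg)
qed

definition mat_vec :: "nat \<Rightarrow> (nat \<Rightarrow> nat \<Rightarrow> real) \<Rightarrow> (nat \<Rightarrow> real) \<Rightarrow> nat \<Rightarrow> real" where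
  "mat_vec m A y = (\<lambda>i. \<Sum>k<m. A i k * y k)"

definition gram_form :: "nat \<Rightarrow> nat \<Rightarrow> (nat \<Rightarrow> nat \<Rightarrow> real) \<Rightarrow> (nat \<Rightarrow> real) \<Rightarrow> real" where
  "gram_form n m A y = (\<Sum>i<n. (mat_vec m A y i)\<^sup>2)"

lemma mat_vec_cong: "(\<And>j. j < m \<Longrightarrow> y j = y' j) \<Longrightarrow> mat_vec m A y = mat_vec m A y'"
  unfolding mat_vec_def by (auto intro!: sum.cong)

lemma mat_vec_add_scaled: "mat_vec m A (\<lambda>j. z j + t * y j) i = mat_vec m A z i + t * mat_vec m A y i"
  unfolding mat_vec_def by (simp add: algebra_simps sum.distrib sum_distrib_left)

lemma mat_vec_scale: "mat_vec m A (\<lambda>j. s * y j) i = s * mat_vec m A y i"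
  unfolding mat_vec_def by (simp add: algebra_simps sum_distrib_left)

lemma gram_form_scale: "gram_form n m A (\<lambda>j. s * y j) = s\<^sup>2 * gram_form n m A y"
  unfolding gram_form_def by (simp add: mat_vec_scale power_mult_distrib sum_distrib_left)

lemma gram_form_eq_vec_norm_power2: "gram_form n m A y = (vec_norm n (mat_vec m A y))\<^sup>2"
  by (simp add: gram_form_def vec_norm_power2)

lemma sum_mult_gram_mult:
  "(\<Sum>j<m. y j * gram_mult n m A z j) = (\<Sum>i<n. mat_vec m A y i * mat_vec m A z i)"
proof -
  have "(\<Sum>j<m. y j * gram_mult n m A z j) = (\<Sum>j<m. \<Sum>i<n. \<Sum>k<m. y j * A i j * (A i k * z k))"
    unfolding gram_mult_def by (simp add: sum_distrib_left mult_ac)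
  also have "\<dots> = (\<Sum>i<n. \<Sum>j<m. \<Sum>k<m. y j * A i j * (A i k * z k))"
    by (rule sum.swap)
  also have "\<dots> = (\<Sum>i<n. mat_vec m A y i * mat_vec m A z i)"
    unfolding mat_vec_def by (simp add: sum_product mult_ac)
  finally show ?thesis .
qed

section \<open>The leading eigenvector of the Gram matrix\<close>

lemma linear_le_quadratic_imp_zero:
  fixes a b :: real
  assumes "\<And>t. a * t + b * t\<^sup>2 \<le> 0"
  shows "a = 0"
proof -
  define t where "t = a / (\<bar>b\<bar> + 1)"
  have "(a * t + b * t\<^sup>2) * (\<bar>b\<bar> + 1)\<^sup>2 \<le> 0"
    using assms[of t] by (simp add: mult_nonpos_nonneg)
  also have "(a * t + b * t\<^sup>2) * (\<bar>b\<bar> + 1)\<^sup>2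
             = a * (t * (\<bar>b\<bar> + 1)) * (\<bar>b\<bar> + 1) + b * (t * (\<bar>b\<bar> + 1))\<^sup>2"
    by (simp add: algebra_simps power2_eq_square)
  also have "t * (\<bar>b\<bar> + 1) = a"
    unfolding t_def by (simp add: add_pos_nonneg)
  also have "a * a * (\<bar>b\<bar> + 1) + b * a\<^sup>2 = a\<^sup>2 * (\<bar>b\<bar> + b + 1)"
    by (simp add: algebra_simps power2_eq_square)
  finally have "a\<^sup>2 * (\<bar>b\<bar> + b + 1) \<le> 0" .
  moreover have "\<bar>b\<bar> + b + 1 > 0" by linarith
  ultimately show ?thesis by (simp add: mult_le_0_iff)
qed

lemma compact_unit_sphere_prefix:
  fixes m :: nat
  shows "compact (PiE UNIV (\<lambda>j. if j < m then {-1..1::real} else {0}) \<inter> {z::nat\<Rightarrow>real. (\<Sum>j<m. (z j)\<^sup>2) = 1})"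
proof (rule compact_Int_closed)
  have "compactin (product_topology (\<lambda>_. euclidean) UNIV) (PiE UNIV (\<lambda>j. if j < m then {-1..1::real} else {0}))"
    by (subst compactin_PiE) auto
  then show "compact (PiE UNIV (\<lambda>j. if j < m then {-1..1::real} else {0}))"
    by (simp add: euclidean_product_topology)
  have "continuous_on UNIV (\<lambda>z::nat\<Rightarrow>real. \<Sum>j<m. (z j)\<^sup>2)"
    by (intro continuous_intros continuous_on_product_coordinates)
  then show "closed {z::nat\<Rightarrow>real. (\<Sum>j<m. (z j)\<^sup>2) = 1}"
    using closed_Collect_eq[OF _ continuous_on_const] by blast
qed

lemma gram_form_normalize:
  fixes z :: "nat \<Rightarrow> real"
  assumes N: "0 < N" "N = (\<Sum>j<m. (z j)\<^sup>2)"
  defines "z' \<equiv> \<lambda>j. if j < m then z j / sqrt N else 0"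
  shows "(\<Sum>j<m. (z' j)\<^sup>2) = 1" "gram_form n m A z' = gram_form n m A z / N"
proof -
  show "(\<Sum>j<m. (z' j)\<^sup>2) = 1"
    using N unfolding z'_def by (simp add: power_divide sum_divide_distrib[symmetric])
  have "mat_vec m A z' = mat_vec m A (\<lambda>j. (1 / sqrt N) * z j)"
    by (intro mat_vec_cong) (simp add: z'_def)
  then show "gram_form n m A z' = gram_form n m A z / N"
    using gram_form_scale[of n m A "1 / sqrt N" z] N(1)
    unfolding gram_form_def by (simp add: power_divide)
qed

lemma exists_rayleigh_maximizer:
  assumes m: "m > 0"
  shows "\<exists>z0. (\<Sum>j<m. (z0 j)\<^sup>2) = 1 \<and> (\<forall>z. gram_form n m A z \<le> gram_form n m A z0 * (\<Sum>j<m. (z j)\<^sup>2))"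
proof -
  define S where "S = PiE UNIV (\<lambda>j. if j < m then {-1..1::real} else {0}) \<inter> {z. (\<Sum>j<m. (z j)\<^sup>2) = 1}"
  have S: "z \<in> S" if "(\<Sum>j<m. (z j)\<^sup>2) = 1" "\<forall>j\<ge>m. z j = 0" for z
  proof -
    have "\<bar>z j\<bar> \<le> 1" if "j < m" for j
      using abs_le_vec_norm[OF that, of z] \<open>(\<Sum>j<m. (z j)\<^sup>2) = 1\<close> by (simp add: vec_norm_def)
    then show ?thesis using that by (auto simp: S_def PiE_iff abs_le_iff)
  qed
  have "(\<Sum>j<m. (if j = 0 then 1 else 0::real)\<^sup>2) = 1"
    using m by (simp add: if_distrib[of "\<lambda>x. x\<^sup>2"] cong: if_cong)
  then have "(\<lambda>j. if j = 0 then 1 else 0) \<in> S" using m by (intro S) auto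
  moreover have "continuous_on S (gram_form n m A)"
    unfolding gram_form_def mat_vec_def
    by (intro continuous_intros continuous_on_subset[OF continuous_on_product_coordinates]) auto
  ultimately obtain z0 where z0: "z0 \<in> S" and max: "\<And>z. z \<in> S \<Longrightarrow> gram_form n m A z \<le> gram_form n m A z0"
    using continuous_attains_sup[OF compact_unit_sphere_prefix[of m, folded S_def]] by blast
  have "gram_form n m A z \<le> gram_form n m A z0 * (\<Sum>j<m. (z j)\<^sup>2)" for z
  proof (cases "\<forall>j<m. z j = 0")
    case True
    then have "mat_vec m A z = mat_vec m A (\<lambda>_. 0)" by (intro mat_vec_cong) auto
    then show ?thesis using True by (simp add: gram_form_def mat_vec_def)
  next
    case False
    define N where "N = (\<Sum>j<m. (z j)\<^sup>2)"
    have "N \<noteq> 0" using False unfolding N_def by (subst sum_nonneg_eq_0_iff) auto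
    then have N: "N > 0" unfolding N_def by (simp add: sum_nonneg order_le_neq_trans)
    have "(\<lambda>j. if j < m then z j / sqrt N else 0) \<in> S"
      using gram_form_normalize(1)[OF N N_def] by (intro S) auto
    then have "gram_form n m A z / N \<le> gram_form n m A z0"
      using max gram_form_normalize(2)[OF N N_def] by metis
    then show ?thesis using N by (simp add: N_def divide_le_eq mult.commute)
  qed
  with z0 show ?thesis unfolding S_def by blast
qed

lemma rayleigh_maximizer_is_eigenvector:
  assumes unit: "(\<Sum>j<m. (z0 j)\<^sup>2) = 1"
    and max: "\<forall>z. gram_form n m A z \<le> gram_form n m A z0 * (\<Sum>j<m. (z j)\<^sup>2)"
  shows "\<forall>j<m. gram_mult n m A z0 j = gram_form n m A z0 * z0 j"
proof -
  define \<mu> where "\<mu> = gram_form n m A z0"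
  have first_order: "(\<Sum>i<n. mat_vec m A z0 i * mat_vec m A y i) = \<mu> * (\<Sum>j<m. z0 j * y j)" for y
  proof -
    define b where "b = (\<Sum>i<n. mat_vec m A z0 i * mat_vec m A y i)"
    define c where "c = (\<Sum>j<m. z0 j * y j)"
    \<comment> \<open>perturbing the maximizer in direction y cannot increase the Rayleigh quotient\<close>
    have "2 * (b - \<mu> * c) * t + (gram_form n m A y - \<mu> * (\<Sum>j<m. (y j)\<^sup>2)) * t\<^sup>2 \<le> 0" for t
    proof -
      have "gram_form n m A (\<lambda>j. z0 j + t * y j) = \<mu> + 2 * t * b + t\<^sup>2 * gram_form n m A y"
        unfolding gram_form_def mat_vec_add_scaled \<mu>_def b_def
        by (simp add: power2_sum sum.distrib sum_distrib_left gram_form_def algebra_simps)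
      moreover have "(\<Sum>j<m. (z0 j + t * y j)\<^sup>2) = 1 + 2 * t * c + t\<^sup>2 * (\<Sum>j<m. (y j)\<^sup>2)"
        using unit unfolding c_def
        by (simp add: power2_sum sum.distrib sum_distrib_left algebra_simps)
      ultimately show ?thesis
        using max[rule_format, of "\<lambda>j. z0 j + t * y j"] by (simp add: \<mu>_def algebra_simps)
    qed
    then have "2 * (b - \<mu> * c) = 0" by (rule linear_le_quadratic_imp_zero)
    then show ?thesis unfolding b_def c_def by simp
  qed
  define r where "r = (\<lambda>j. gram_mult n m A z0 j - \<mu> * z0 j)"
  have "(\<Sum>j<m. r j * gram_mult n m A z0 j) = \<mu> * (\<Sum>j<m. z0 j * r j)"
    using first_order[of r] sum_mult_gram_mult[where y=r and z=z0 and A=A and n=n and m=m]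
    by (simp add: mult.commute)
  then have "(\<Sum>j<m. (r j)\<^sup>2) = 0"
    unfolding r_def by (simp add: power2_eq_square algebra_simps sum_subtractf sum_distrib_left sum.distrib)
  then show ?thesis by (subst (asm) sum_nonneg_eq_0_iff) (auto simp: r_def \<mu>_def)
qed

lemma exists_top_gram_eigenvector:
  assumes "m > 0"
  shows "\<exists>z \<mu>. (\<exists>j<m. z j \<noteq> 0) \<and> (\<forall>j<m. gram_mult n m A z j = \<mu> * z j) \<and>
              (\<forall>y. gram_form n m A y \<le> \<mu> * (\<Sum>j<m. (y j)\<^sup>2))"
proof -
  obtain z0 where unit: "(\<Sum>j<m. (z0 j)\<^sup>2) = 1"
    and max: "\<forall>z. gram_form n m A z \<le> gram_form n m A z0 * (\<Sum>j<m. (z j)\<^sup>2)"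
    using exists_rayleigh_maximizer[OF assms] by blast
  have "\<exists>j<m. z0 j \<noteq> 0"
  proof (rule ccontr)
    assume "\<not> (\<exists>j<m. z0 j \<noteq> 0)"
    then have "(\<Sum>j<m. (z0 j)\<^sup>2) = 0" by simp
    with unit show False by simp
  qed
  with rayleigh_maximizer_is_eigenvector[OF unit max] max show ?thesis by blast
qed

lemma leading_right_sv_vec_norm_pos: "leading_right_sv n m A w \<Longrightarrow> 0 < vec_norm m w"
  using vec_norm_nonneg[of m w] vec_norm_eq_0_iff[of m w] by (fastforce simp: leading_right_sv_def)

lemma leading_right_sv_rayleigh:
  assumes "leading_right_sv n m A w"
  shows "vec_norm n (mat_vec m A y) * vec_norm m w \<le> vec_norm n (mat_vec m A w) * vec_norm m y"
proof -
  obtain lam where w: "\<forall>j<m. gram_mult n m A w j = lam * w j"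
    and top: "\<forall>\<mu> z. (\<exists>j<m. z j \<noteq> 0) \<and> (\<forall>j<m. gram_mult n m A z j = \<mu> * z j) \<longrightarrow> \<mu> \<le> lam"
    and "\<exists>j<m. w j \<noteq> 0"
    using assms unfolding leading_right_sv_def by blast
  then have "m > 0" by auto
  then obtain z \<mu> where "\<exists>j<m. z j \<noteq> 0" "\<forall>j<m. gram_mult n m A z j = \<mu> * z j"
    and max: "\<forall>y. gram_form n m A y \<le> \<mu> * (\<Sum>j<m. (y j)\<^sup>2)"
    using exists_top_gram_eigenvector by blast
  then have "\<mu> \<le> lam" using top by blast
  have "gram_form n m A w = (\<Sum>j<m. w j * gram_mult n m A w j)"
    by (simp add: gram_form_def sum_mult_gram_mult power2_eq_square)
  also have "\<dots> = lam * (vec_norm m w)\<^sup>2"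
    unfolding vec_norm_power2 using w by (simp add: sum_distrib_left power2_eq_square mult_ac)
  finally have gram_w: "gram_form n m A w = lam * (vec_norm m w)\<^sup>2" .
  have "gram_form n m A y \<le> \<mu> * (vec_norm m y)\<^sup>2"
    using max by (simp add: vec_norm_power2)
  also have "\<dots> \<le> lam * (vec_norm m y)\<^sup>2"
    using \<open>\<mu> \<le> lam\<close> by (rule mult_right_mono) simp
  finally have "gram_form n m A y * (vec_norm m w)\<^sup>2 \<le> lam * (vec_norm m y)\<^sup>2 * (vec_norm m w)\<^sup>2"
    by (rule mult_right_mono) simp
  also have "\<dots> = gram_form n m A w * (vec_norm m y)\<^sup>2"
    unfolding gram_w by (simp add: mult_ac)
  finally have "gram_form n m A y * (vec_norm m w)\<^sup>2 \<le> gram_form n m A w * (vec_norm m y)\<^sup>2" .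
  then have "(vec_norm n (mat_vec m A y) * vec_norm m w)\<^sup>2 \<le> (vec_norm n (mat_vec m A w) * vec_norm m y)\<^sup>2"
    by (simp add: gram_form_eq_vec_norm_power2 power_mult_distrib)
  then show ?thesis by (rule power2_le_imp_le) (simp add: vec_norm_nonneg)
qed

section \<open>Operator norm bounds from a grid\<close>

definition bilinear_form :: "nat \<Rightarrow> nat \<Rightarrow> (nat \<Rightarrow> nat \<Rightarrow> real) \<Rightarrow> (nat \<Rightarrow> real) \<Rightarrow> (nat \<Rightarrow> real) \<Rightarrow> real" where
  "bilinear_form n m F x y = (\<Sum>i<n. \<Sum>j<m. x i * F i j * y j)"

definition op_norm_le :: "nat \<Rightarrow> nat \<Rightarrow> (nat \<Rightarrow> nat \<Rightarrow> real) \<Rightarrow> real \<Rightarrow> bool" where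
  "op_norm_le n m F S \<longleftrightarrow>
     (\<forall>x y. vec_norm n x \<le> 1 \<longrightarrow> vec_norm m y \<le> 1 \<longrightarrow> \<bar>bilinear_form n m F x y\<bar> \<le> S)"

lemma bilinear_form_eq_sum_mat_vec: "bilinear_form n m F x y = (\<Sum>i<n. x i * mat_vec m F y i)"
  by (simp add: bilinear_form_def mat_vec_def sum_distrib_left mult.assoc)

lemma bilinear_form_scale:
  "bilinear_form n m F (\<lambda>i. a * x i) (\<lambda>j. b * y j) = a * b * bilinear_form n m F x y"
  by (simp add: bilinear_form_def sum_distrib_left mult_ac)

lemma bilinear_form_diff:
  "bilinear_form n m F x y - bilinear_form n m F x' y' =
     bilinear_form n m F (\<lambda>i. x i - x' i) y + bilinear_form n m F x' (\<lambda>j. y j - y' j)"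
  unfolding bilinear_form_def by (simp add: algebra_simps sum_subtractf sum.distrib)

lemma abs_bilinear_form_le_entrywise:
  assumes "\<forall>i<n. \<forall>j<m. \<bar>F i j\<bar> \<le> 1"
  shows "\<bar>bilinear_form n m F x y\<bar> \<le> sqrt (real n) * vec_norm n x * (sqrt (real m) * vec_norm m y)"
proof -
  have "\<bar>bilinear_form n m F x y\<bar> \<le> (\<Sum>i<n. \<Sum>j<m. \<bar>x i\<bar> * \<bar>F i j\<bar> * \<bar>y j\<bar>)"
    unfolding bilinear_form_def abs_mult[symmetric] by (rule order_trans[OF sum_abs sum_mono]) (rule sum_abs)
  also have "\<dots> \<le> (\<Sum>i<n. \<Sum>j<m. \<bar>x i\<bar> * 1 * \<bar>y j\<bar>)"
    using assms by (intro sum_mono mult_right_mono mult_left_mono) auto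
  also have "\<dots> = (\<Sum>i<n. \<bar>x i\<bar>) * (\<Sum>j<m. \<bar>y j\<bar>)"
    by (simp add: sum_product)
  also have "\<dots> \<le> sqrt (real n) * vec_norm n x * (sqrt (real m) * vec_norm m y)"
    by (intro mult_mono sum_abs_le_sqrt_mult_vec_norm) (auto simp: sum_nonneg vec_norm_nonneg)
  finally show ?thesis .
qed

lemma op_norm_le_nonneg:
  assumes "op_norm_le n m F S"
  shows "S \<ge> 0"
proof -
  have "vec_norm n (\<lambda>_. 0) \<le> 1" "vec_norm m (\<lambda>_. 0) \<le> 1" by (simp_all add: vec_norm_def)
  then have "\<bar>bilinear_form n m F (\<lambda>_. 0) (\<lambda>_. 0)\<bar> \<le> S"
    using assms unfolding op_norm_le_def by blast
  then show ?thesis by (meson abs_ge_zero order_trans)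
qed

lemma op_norm_le_mono: "op_norm_le n m F S \<Longrightarrow> S \<le> S' \<Longrightarrow> op_norm_le n m F S'"
  unfolding op_norm_le_def by (meson order_trans)

lemma op_norm_le_abs_bilinear_form_le:
  assumes "op_norm_le n m F S"
  shows "\<bar>bilinear_form n m F x y\<bar> \<le> S * vec_norm n x * vec_norm m y"
proof (cases "vec_norm n x = 0 \<or> vec_norm m y = 0")
  case True
  then have "bilinear_form n m F x y = 0" by (auto simp: vec_norm_eq_0_iff bilinear_form_def)
  then show ?thesis using op_norm_le_nonneg[OF assms] by (simp add: vec_norm_nonneg)
next
  case False
  define a b where "a = vec_norm n x" and "b = vec_norm m y"
  have ab: "a > 0" "b > 0" using False vec_norm_nonneg[of n x] vec_norm_nonneg[of m y]
    by (auto simp: a_def b_def)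
  have "vec_norm n (\<lambda>i. (1 / a) * x i) \<le> 1" "vec_norm m (\<lambda>j. (1 / b) * y j) \<le> 1"
    using ab by (simp_all only: vec_norm_scale) (simp_all add: a_def b_def)
  then have "\<bar>bilinear_form n m F (\<lambda>i. (1 / a) * x i) (\<lambda>j. (1 / b) * y j)\<bar> \<le> S"
    using assms unfolding op_norm_le_def by blast
  then have "\<bar>1 / a * (1 / b) * bilinear_form n m F x y\<bar> \<le> S"
    by (simp only: bilinear_form_scale)
  then have "\<bar>bilinear_form n m F x y\<bar> / (a * b) \<le> S"
    using ab by (simp add: abs_mult)
  then show ?thesis using ab by (simp add: a_def b_def pos_divide_le_eq mult_ac)
qed

lemma op_norm_le_vec_norm_mat_vec_le:
  assumes "op_norm_le n m F S"
  shows "vec_norm n (mat_vec m F y) \<le> S * vec_norm m y"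
proof -
  define z where "z = mat_vec m F y"
  have "(vec_norm n z)\<^sup>2 = bilinear_form n m F z y"
    unfolding vec_norm_power2 bilinear_form_eq_sum_mat_vec z_def by (simp add: power2_eq_square)
  also have "\<dots> \<le> S * vec_norm n z * vec_norm m y"
    using op_norm_le_abs_bilinear_form_le[OF assms] by (meson abs_le_D1)
  finally have "vec_norm n z * vec_norm n z \<le> vec_norm n z * (S * vec_norm m y)"
    by (simp add: power2_eq_square mult_ac)
  then show ?thesis
    using op_norm_le_nonneg[OF assms] vec_norm_nonneg[of n z] vec_norm_nonneg[of m y]
    by (cases "vec_norm n z = 0") (auto simp: z_def)
qed

definition grid :: "nat \<Rightarrow> real \<Rightarrow> int \<Rightarrow> (nat \<Rightarrow> real) set" where
  "grid d h K = (\<lambda>k j. if j < d then h * of_int (k j) else 0) ` PiE {..<d} (\<lambda>_. {-K..K})"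

lemma finite_grid: "finite (grid d h K)"
  unfolding grid_def by (intro finite_imageI finite_PiE) auto

lemma card_grid_le: "card (grid d h K) \<le> nat (2 * K + 1) ^ d"
proof -
  have "card (grid d h K) \<le> card (PiE {..<d} (\<lambda>_. {-K..K}))"
    unfolding grid_def by (intro card_image_le finite_PiE) auto
  also have "\<dots> = nat (2 * K + 1) ^ d"
    by (subst card_PiE) auto
  finally show ?thesis .
qed

lemma exists_grid_point_near:
  assumes h: "h > 0" and x: "vec_norm d x \<le> 1" and K: "1 / h + 1 \<le> of_int K"
  shows "\<exists>x'\<in>grid d h K. vec_norm d (\<lambda>j. x j - x' j) \<le> h * sqrt (real d)"
proof -
  define k where "k = restrict (\<lambda>j. \<lfloor>x j / h\<rfloor>) {..<d}"
  define x' where "x' = (\<lambda>j. if j < d then h * of_int (k j) else 0)"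
  have floor: "of_int \<lfloor>x j / h\<rfloor> \<le> x j / h" "x j / h < of_int \<lfloor>x j / h\<rfloor> + 1" for j
    by linarith+
  have "\<lfloor>x j / h\<rfloor> \<in> {-K..K}" if "j < d" for j
  proof -
    have "\<bar>x j / h\<bar> \<le> 1 / h"
      using abs_le_vec_norm[OF that, of x] x h by (simp add: divide_right_mono)
    then have "- of_int K \<le> (of_int \<lfloor>x j / h\<rfloor> :: real)" "of_int \<lfloor>x j / h\<rfloor> \<le> (of_int K :: real)"
      using floor[of j] K unfolding abs_le_iff by linarith+
    then show ?thesis by simp
  qed
  then have "k \<in> PiE {..<d} (\<lambda>_. {-K..K})" unfolding k_def by auto
  then have "x' \<in> grid d h K"
    unfolding grid_def x'_def by (rule image_eqI[rotated]) simp
  moreover have "(x j - x' j)\<^sup>2 \<le> h\<^sup>2" if "j < d" for j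
  proof -
    have "h * of_int \<lfloor>x j / h\<rfloor> \<le> h * (x j / h)"
      by (rule mult_left_mono[OF floor(1)]) (use h in simp)
    moreover have "h * (x j / h) < h * (of_int \<lfloor>x j / h\<rfloor> + 1)"
      by (rule mult_strict_left_mono[OF floor(2) h])
    ultimately have "0 \<le> x j - h * of_int \<lfloor>x j / h\<rfloor>" "x j - h * of_int \<lfloor>x j / h\<rfloor> \<le> h"
      using h by (simp_all add: algebra_simps)
    then show ?thesis using that by (simp add: x'_def k_def power_mono)
  qed
  then have "(vec_norm d (\<lambda>j. x j - x' j))\<^sup>2 \<le> (h * sqrt (real d))\<^sup>2"
    unfolding vec_norm_power2 using sum_mono[of "{..<d}" "\<lambda>j. (x j - x' j)\<^sup>2" "\<lambda>_. h\<^sup>2"]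
    by (simp add: power_mult_distrib mult.commute)
  then have "vec_norm d (\<lambda>j. x j - x' j) \<le> h * sqrt (real d)"
    by (rule power2_le_imp_le) (use h in simp)
  ultimately show ?thesis by blast
qed

lemma op_norm_le_of_grid:
  assumes F: "\<forall>i<n. \<forall>j<m. \<bar>F i j\<bar> \<le> 1" and \<delta>: "0 < \<delta>" "\<delta> \<le> 1"
    and h: "h > 0" "h * sqrt (real n) \<le> \<delta>" "h * sqrt (real m) \<le> \<delta>"
    and K: "1 / h + 1 \<le> of_int K"
    and grid: "\<forall>x'\<in>grid n h K. \<forall>y'\<in>grid m h K. vec_norm n x' \<le> 1 + \<delta> \<longrightarrow> vec_norm m y' \<le> 1 + \<delta> \<longrightarrow>
                 \<bar>bilinear_form n m F x' y'\<bar> \<le> T"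
  shows "op_norm_le n m F (T + 3 * \<delta> * sqrt (real n) * sqrt (real m))"
  unfolding op_norm_le_def
proof (intro allI impI)
  fix x y assume x: "vec_norm n x \<le> 1" and y: "vec_norm m y \<le> 1"
  obtain x' where x': "x' \<in> grid n h K" and dx: "vec_norm n (\<lambda>i. x i - x' i) \<le> \<delta>"
    using exists_grid_point_near[OF h(1) x K] h(2) by force
  obtain y' where y': "y' \<in> grid m h K" and dy: "vec_norm m (\<lambda>j. y j - y' j) \<le> \<delta>"
    using exists_grid_point_near[OF h(1) y K] h(3) by force
  have nx': "vec_norm n x' \<le> 1 + \<delta>" using vec_norm_le_add_diff[of n x' x] x dx by linarith
  have ny': "vec_norm m y' \<le> 1 + \<delta>" using vec_norm_le_add_diff[of m y' y] y dy by linarith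
  have "\<bar>bilinear_form n m F (\<lambda>i. x i - x' i) y\<bar> \<le> sqrt (real n) * \<delta> * (sqrt (real m) * 1)"
    by (rule order_trans[OF abs_bilinear_form_le_entrywise[OF F]])
       (use dx y \<delta> in \<open>intro mult_mono mult_left_mono, auto simp: vec_norm_nonneg\<close>)
  moreover have "\<bar>bilinear_form n m F x' (\<lambda>j. y j - y' j)\<bar> \<le> sqrt (real n) * 2 * (sqrt (real m) * \<delta>)"
    by (rule order_trans[OF abs_bilinear_form_le_entrywise[OF F]])
       (use nx' dy \<delta> in \<open>intro mult_mono mult_left_mono, auto simp: vec_norm_nonneg\<close>)
  moreover have "\<bar>bilinear_form n m F x' y'\<bar> \<le> T" using grid x' y' nx' ny' by blast
  ultimately show "\<bar>bilinear_form n m F x y\<bar> \<le> T + 3 * \<delta> * sqrt (real n) * sqrt (real m)"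
    using bilinear_form_diff[of n m F x y x' y'] by (simp add: algebra_simps)
qed

section \<open>Perturbation of the leading singular vector\<close>

lemma vec_norm_mat_vec_rank_one_perturbation:
  assumes "op_norm_le n m (\<lambda>i j. A i j - u i * v j) S"
  shows "\<bar>vec_norm n (mat_vec m A y) - vec_norm n u * \<bar>vec_inner m v y\<bar>\<bar> \<le> S * vec_norm m y"
proof -
  have "mat_vec m (\<lambda>i j. A i j - u i * v j) y = (\<lambda>i. mat_vec m A y i - vec_inner m v y * u i)"
    by (simp add: mat_vec_def vec_inner_def algebra_simps sum_subtractf sum_distrib_left)
  then have "vec_norm n (\<lambda>i. mat_vec m A y i - vec_inner m v y * u i) \<le> S * vec_norm m y"
    using op_norm_le_vec_norm_mat_vec_le[OF assms, of y] by simp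
  moreover have "vec_norm n (\<lambda>i. vec_inner m v y * u i) = vec_norm n u * \<bar>vec_inner m v y\<bar>"
    by (simp add: vec_norm_scale)
  ultimately show ?thesis
    using abs_vec_norm_diff_le[of n "mat_vec m A y" "\<lambda>i. vec_inner m v y * u i"] by linarith
qed

lemma leading_right_sv_alignment:
  assumes lead: "leading_right_sv n m A w" and aligned: "vec_inner m w v \<ge> 0"
    and F: "op_norm_le n m (\<lambda>i j. A i j - u i * v j) S" and v: "vec_norm m v > 0"
  shows "vec_norm m w * (vec_norm n u * vec_norm m v - 2 * S) \<le> vec_norm n u * vec_inner m w v"
proof -
  define U V W where "U = vec_norm n u" and "V = vec_norm m v" and "W = vec_norm m w"
  have "W \<ge> 0" by (simp add: W_def vec_norm_nonneg)
  have "vec_inner m v v = V\<^sup>2"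
    unfolding V_def vec_norm_power2 vec_inner_def by (simp add: power2_eq_square)
  moreover have "vec_inner m v w = vec_inner m w v"
    by (simp add: vec_inner_def mult.commute)
  ultimately have Av: "U * V\<^sup>2 - S * V \<le> vec_norm n (mat_vec m A v)"
    and Aw: "vec_norm n (mat_vec m A w) \<le> U * vec_inner m w v + S * W"
    using vec_norm_mat_vec_rank_one_perturbation[OF F, of v] vec_norm_mat_vec_rank_one_perturbation[OF F, of w]
      aligned v by (auto simp: U_def V_def W_def abs_le_iff)
  have "(U * V\<^sup>2 - S * V) * W \<le> vec_norm n (mat_vec m A v) * W"
    using Av \<open>W \<ge> 0\<close> by (rule mult_right_mono)
  also have "\<dots> \<le> vec_norm n (mat_vec m A w) * V"
    using leading_right_sv_rayleigh[OF lead, of v] by (simp add: V_def W_def)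
  also have "\<dots> \<le> (U * vec_inner m w v + S * W) * V"
    using Aw v by (simp add: V_def)
  finally have "V * ((U * V - 2 * S) * W) \<le> V * (U * vec_inner m w v)"
    by (simp add: algebra_simps power2_eq_square)
  then show ?thesis using v by (simp add: U_def V_def W_def mult.commute)
qed

lemma estimate_error_imp_large_residual:
  fixes P I R x \<epsilon> :: real
  assumes "0 < P" "I \<le> P" "P * (1 - \<epsilon> / 2) \<le> I" "0 \<le> x" "x \<le> 1"
    and "\<epsilon> < \<bar>(R + x * I) / P - x\<bar>"
  shows "\<epsilon> * P / 2 \<le> \<bar>R\<bar>"
proof -
  define t where "t = x * (1 - I / P)"
  have "(R + x * I) / P - x = R / P - t"
    using assms(1) by (simp add: t_def field_simps)
  then have "\<epsilon> < \<bar>R / P - t\<bar>" using assms(6) by simp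
  moreover have gap: "0 \<le> 1 - I / P" "1 - I / P \<le> \<epsilon> / 2"
    using assms(1-3) by (simp_all add: field_simps)
  have "0 \<le> t" using gap(1) assms(4) by (simp add: t_def)
  moreover have "t \<le> \<epsilon> / 2"
    using mult_left_le_one_le[OF gap(1) assms(4,5)] gap(2) unfolding t_def by linarith
  ultimately have "\<epsilon> / 2 < \<bar>R / P\<bar>"
    using abs_triangle_ineq4[of "R / P" t] by linarith
  then have "\<epsilon> / 2 * P < \<bar>R\<bar>" using assms(1) by (simp add: pos_less_divide_eq)
  then show ?thesis by simp
qed

lemma row_estimate_error_imp_residual:
  fixes A :: "nat \<Rightarrow> nat \<Rightarrow> real" and u' v w r :: "nat \<Rightarrow> real" and x \<epsilon> :: real
  assumes F: "op_norm_le n m (\<lambda>i j. A i j - u' i * v j) (\<epsilon> * vec_norm n u' * vec_norm m v / 4)"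
    and lead: "leading_right_sv n m A w" and aligned: "vec_inner m w v \<ge> 0"
    and u': "vec_norm n u' > 0" and v: "vec_norm m v > 0" and x: "0 \<le> x" "x \<le> 1"
    and err: "\<epsilon> < \<bar>(\<Sum>j<m. r j * w j) / (vec_norm m w * vec_norm m v) - x\<bar>"
  shows "\<epsilon> * (vec_norm m w * vec_norm m v) / 2 \<le> \<bar>\<Sum>j<m. (r j - x * v j) * w j\<bar>"
proof (rule estimate_error_imp_large_residual[OF _ _ _ x])
  show "0 < vec_norm m w * vec_norm m v"
    using leading_right_sv_vec_norm_pos[OF lead] v by simp
  show "vec_inner m w v \<le> vec_norm m w * vec_norm m v" by (rule vec_inner_le_norm_mult)
  have "vec_norm n u' * (vec_norm m w * vec_norm m v * (1 - \<epsilon> / 2)) \<le> vec_norm n u' * vec_inner m w v"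
    using leading_right_sv_alignment[OF lead aligned F v] by (simp add: algebra_simps)
  then show "vec_norm m w * vec_norm m v * (1 - \<epsilon> / 2) \<le> vec_inner m w v"
    using u' by simp
  have "(\<Sum>j<m. r j * w j) = (\<Sum>j<m. (r j - x * v j) * w j) + x * vec_inner m w v"
    by (simp add: vec_inner_def algebra_simps sum_subtractf sum_distrib_left)
  then show "\<epsilon> < \<bar>((\<Sum>j<m. (r j - x * v j) * w j) + x * vec_inner m w v) / (vec_norm m w * vec_norm m v) - x\<bar>"
    using err by simp
qed

section \<open>Concentration for independent Bernoulli matrices\<close>

lemma prob_weighted_bernoulli_sum_deviation:
  fixes I :: "'a set" and p a :: "'a \<Rightarrow> real"
  assumes fin: "finite I" and p: "\<forall>k\<in>I. p k \<in> {0..1}" and t: "t > 0"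
    and \<sigma>: "(\<Sum>k\<in>I. (a k)\<^sup>2) \<le> \<sigma>"
  shows "measure_pmf.prob (Pi_pmf I dflt (\<lambda>k. bernoulli_pmf (p k)))
           {f. \<bar>\<Sum>k\<in>I. a k * (of_bool (f k) - p k)\<bar> \<ge> t} \<le> 2 * exp (-2 * t\<^sup>2 / \<sigma>)"
proof (cases "(\<Sum>k\<in>I. (a k)\<^sup>2) = 0")
  case True
  then have "\<forall>k\<in>I. a k = 0" using fin by (subst (asm) sum_nonneg_eq_0_iff) auto
  then show ?thesis using t by simp
next
  case False
  define P where "P = Pi_pmf I dflt (\<lambda>k. bernoulli_pmf (p k))"
  define X where "X = (\<lambda>k f. a k * (of_bool (f k) - p k))"
  define lo where "lo = (\<lambda>k. min (a k * (- p k)) (a k * (1 - p k)))"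
  define hi where "hi = (\<lambda>k. max (a k * (- p k)) (a k * (1 - p k)))"
  have range: "(hi k - lo k)\<^sup>2 = (a k)\<^sup>2" for k
    unfolding hi_def lo_def
    by (cases "a k \<ge> 0") (auto simp: max_def min_def algebra_simps power2_eq_square mult_left_mono_neg)
  have centered: "measure_pmf.expectation P (X k) = 0" if k: "k \<in> I" for k
  proof -
    have "measure_pmf.expectation P (X k) =
          measure_pmf.expectation (map_pmf (\<lambda>f. f k) P) (\<lambda>b. a k * (of_bool b - p k))"
      by (simp add: X_def)
    also have "map_pmf (\<lambda>f. f k) P = bernoulli_pmf (p k)"
      using k fin by (simp add: P_def Pi_pmf_component)
    finally show ?thesis using p k by (simp add: algebra_simps)
  qed
  interpret Hoeffding_ineq "measure_pmf P" I X lo hi "\<Sum>k\<in>I. measure_pmf.expectation P (X k)"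
  proof unfold_locales
    show "finite I" by fact
    show "prob_space.indep_vars (measure_pmf P) (\<lambda>_. borel) X I"
      unfolding P_def X_def
      by (intro prob_space.indep_vars_compose2[OF _ indep_vars_Pi_pmf])
         (auto simp: measure_pmf.prob_space_axioms fin)
    show "AE f in measure_pmf P. X k f \<in> {lo k..hi k}" if "k \<in> I" for k
      by (intro AE_I2) (auto simp: X_def lo_def hi_def)
  qed simp
  have pos: "(\<Sum>k\<in>I. (a k)\<^sup>2) > 0" using False by (simp add: sum_nonneg order_le_neq_trans)
  have "measure_pmf.prob P {f. \<bar>\<Sum>k\<in>I. X k f\<bar> \<ge> t} \<le> 2 * exp (-2 * t\<^sup>2 / (\<Sum>k\<in>I. (a k)\<^sup>2))"
    using Hoeffding_ineq_abs_ge[of t] t pos by (simp add: centered range)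
  also have "\<dots> \<le> 2 * exp (-2 * t\<^sup>2 / \<sigma>)"
    using \<sigma> pos t by (auto intro!: divide_left_mono mult_pos_pos)
  finally show ?thesis by (simp add: P_def X_def)
qed

definition bernoulli_matrix_pmf :: "nat \<Rightarrow> nat \<Rightarrow> (nat \<Rightarrow> nat \<Rightarrow> real) \<Rightarrow> (nat \<times> nat \<Rightarrow> bool) pmf" where
  "bernoulli_matrix_pmf n m p = Pi_pmf ({0..<n} \<times> {0..<m}) False (\<lambda>k. bernoulli_pmf (case_prod p k))"

lemma rank_one_pmf_eq_bernoulli_matrix_pmf:
  "rank_one_pmf n m u v = bernoulli_matrix_pmf n m (\<lambda>i j. u i * v j)"
  unfolding rank_one_pmf_def bernoulli_matrix_pmf_def
  by (rule arg_cong[where f="Pi_pmf _ False"]) (auto simp: fun_eq_iff)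

lemma sum_rectangle:
  fixes n m :: nat
  shows "(\<Sum>k\<in>{0..<n}\<times>{0..<m}. f k) = (\<Sum>i<n. \<Sum>j<m. f (i, j))"
  unfolding atLeast0LessThan sum.cartesian_product by (simp add: case_prod_unfold)

lemma prob_centered_bilinear_form_deviation:
  assumes p: "\<forall>i<n. \<forall>j<m. p i j \<in> {0..1}" and t: "t > 0"
    and \<sigma>: "(vec_norm n x)\<^sup>2 * (vec_norm m y)\<^sup>2 \<le> \<sigma>"
  shows "measure_pmf.prob (bernoulli_matrix_pmf n m p)
           {X. \<bar>bilinear_form n m (\<lambda>i j. real_mat X i j - p i j) x y\<bar> \<ge> t} \<le> 2 * exp (-2 * t\<^sup>2 / \<sigma>)"
proof -
  define a where "a = (\<lambda>(i, j). x i * y j)"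
  have "bilinear_form n m (\<lambda>i j. real_mat X i j - p i j) x y =
        (\<Sum>k\<in>{0..<n}\<times>{0..<m}. a k * (of_bool (X k) - case_prod p k))" for X
    by (simp add: sum_rectangle a_def bilinear_form_def real_mat_def mult_ac)
  moreover have "(\<Sum>k\<in>{0..<n}\<times>{0..<m}. (a k)\<^sup>2) = (vec_norm n x)\<^sup>2 * (vec_norm m y)\<^sup>2"
    by (simp add: sum_rectangle a_def vec_norm_power2 sum_product power_mult_distrib)
  ultimately show ?thesis
    unfolding bernoulli_matrix_pmf_def
    using prob_weighted_bernoulli_sum_deviation[of "{0..<n}\<times>{0..<m}" "case_prod p" t a \<sigma>] p t \<sigma>
    by auto
qed

lemma bilinear_form_unit_left:
  assumes "i < n"
  shows "bilinear_form n m F (\<lambda>k. of_bool (k = i)) y = (\<Sum>j<m. F i j * y j)"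
proof -
  have "bilinear_form n m F (\<lambda>k. of_bool (k = i)) y = (\<Sum>k<n. if k = i then \<Sum>j<m. F i j * y j else 0)"
    unfolding bilinear_form_def by (intro sum.cong) auto
  then show ?thesis using assms by simp
qed

lemma prob_centered_row_deviation:
  assumes p: "\<forall>i<n. \<forall>j<m. p i j \<in> {0..1}" and t: "t > 0" and i: "i < n"
  shows "measure_pmf.prob (bernoulli_matrix_pmf n m p)
           {X. \<bar>\<Sum>j<m. (real_mat X i j - p i j) * y j\<bar> \<ge> t} \<le> 2 * exp (-2 * t\<^sup>2 / (vec_norm m y)\<^sup>2)"
proof -
  have "(vec_norm n (\<lambda>k. of_bool (k = i)))\<^sup>2 = (\<Sum>k<n. if k = i then 1 else 0)"
    unfolding vec_norm_power2 by (intro sum.cong) auto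
  then have "(vec_norm n (\<lambda>k. of_bool (k = i)))\<^sup>2 = 1"
    using i by simp
  then show ?thesis
    using prob_centered_bilinear_form_deviation[OF p t, of "\<lambda>k. of_bool (k = i)" y]
    by (simp add: bilinear_form_unit_left[OF i])
qed

lemma prob_le_card_mult_of_cover:
  assumes "finite G" "A \<subseteq> (\<Union>g\<in>G. E g)" "\<And>g. g \<in> G \<Longrightarrow> measure_pmf.prob p (E g) \<le> r"
  shows "measure_pmf.prob p A \<le> real (card G) * r"
proof -
  have "measure_pmf.prob p A \<le> measure_pmf.prob p (\<Union>g\<in>G. E g)"
    using assms(2) by (intro measure_pmf.finite_measure_mono) auto
  also have "\<dots> \<le> (\<Sum>g\<in>G. measure_pmf.prob p (E g))"
    using assms(1) by (intro measure_pmf.finite_measure_subadditive_finite) auto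
  also have "\<dots> \<le> real (card G) * r"
    using sum_mono[of G _ "\<lambda>_. r", OF assms(3)] by simp
  finally show ?thesis .
qed

lemma card_grid_pairs_le:
  assumes "G \<subseteq> grid n h K \<times> grid m h K"
  shows "real (card G) \<le> real (nat (2 * K + 1)) ^ (n + m)"
proof -
  have "card G \<le> card (grid n h K) * card (grid m h K)"
    using assms unfolding card_cartesian_product[symmetric]
    by (intro card_mono) (simp_all add: finite_grid)
  also have "\<dots> \<le> nat (2 * K + 1) ^ n * nat (2 * K + 1) ^ m"
    by (intro mult_mono card_grid_le) auto
  also have "\<dots> = nat (2 * K + 1) ^ (n + m)" by (simp add: power_add)
  finally show ?thesis by (metis of_nat_le_iff of_nat_power)
qed

lemma prob_not_op_norm_le:
  assumes p: "\<forall>i<n. \<forall>j<m. p i j \<in> {0..1}" and \<delta>: "0 < \<delta>" "\<delta> \<le> 1"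
    and h: "h > 0" "h * sqrt (real n) \<le> \<delta>" "h * sqrt (real m) \<le> \<delta>"
    and K: "1 / h + 1 \<le> of_int K" and T: "T > 0"
  shows "measure_pmf.prob (bernoulli_matrix_pmf n m p)
           {X. \<not> op_norm_le n m (\<lambda>i j. real_mat X i j - p i j) (T + 3 * \<delta> * sqrt (real n) * sqrt (real m))}
         \<le> real (nat (2 * K + 1)) ^ (n + m) * (2 * exp (-2 * T\<^sup>2 / (1 + \<delta>) ^ 4))"
proof -
  define G where "G = {x\<in>grid n h K. vec_norm n x \<le> 1 + \<delta>} \<times> {y\<in>grid m h K. vec_norm m y \<le> 1 + \<delta>}"
  define F where "F = (\<lambda>X i j. real_mat X i j - p i j)"
  define E where "E = (\<lambda>(x, y). {X. \<bar>bilinear_form n m (F X) x y\<bar> \<ge> T})"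
  have cover: "{X. \<not> op_norm_le n m (F X) (T + 3 * \<delta> * sqrt (real n) * sqrt (real m))} \<subseteq> (\<Union>g\<in>G. E g)"
  proof
    fix X assume "X \<in> {X. \<not> op_norm_le n m (F X) (T + 3 * \<delta> * sqrt (real n) * sqrt (real m))}"
    moreover have "\<forall>i<n. \<forall>j<m. \<bar>F X i j\<bar> \<le> 1"
      using p by (auto simp: F_def real_mat_def)
    ultimately have "\<not> (\<forall>x\<in>grid n h K. \<forall>y\<in>grid m h K. vec_norm n x \<le> 1 + \<delta> \<longrightarrow> vec_norm m y \<le> 1 + \<delta> \<longrightarrow>
                       \<bar>bilinear_form n m (F X) x y\<bar> \<le> T)"
      using op_norm_le_of_grid[OF _ \<delta> h K] by blast
    then show "X \<in> (\<Union>g\<in>G. E g)" by (auto simp: G_def E_def not_le intro: less_imp_le)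
  qed
  have bound: "measure_pmf.prob (bernoulli_matrix_pmf n m p) (E g) \<le> 2 * exp (-2 * T\<^sup>2 / (1 + \<delta>) ^ 4)"
    if "g \<in> G" for g
  proof -
    obtain x y where g: "g = (x, y)" "vec_norm n x \<le> 1 + \<delta>" "vec_norm m y \<le> 1 + \<delta>"
      using \<open>g \<in> G\<close> by (auto simp: G_def)
    then have "(vec_norm n x)\<^sup>2 * (vec_norm m y)\<^sup>2 \<le> (1 + \<delta>)\<^sup>2 * (1 + \<delta>)\<^sup>2"
      by (intro mult_mono power_mono) (auto simp: vec_norm_nonneg)
    then show ?thesis
      using prob_centered_bilinear_form_deviation[OF p T, of x y] by (simp add: g E_def F_def)
  qed
  have "finite G" by (simp add: G_def finite_grid)
  then have "measure_pmf.prob (bernoulli_matrix_pmf n m p)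
               {X. \<not> op_norm_le n m (F X) (T + 3 * \<delta> * sqrt (real n) * sqrt (real m))}
             \<le> real (card G) * (2 * exp (-2 * T\<^sup>2 / (1 + \<delta>) ^ 4))"
    using cover bound by (rule prob_le_card_mult_of_cover)
  also have "\<dots> \<le> real (nat (2 * K + 1)) ^ (n + m) * (2 * exp (-2 * T\<^sup>2 / (1 + \<delta>) ^ 4))"
    by (intro mult_right_mono card_grid_pairs_le) (auto simp: G_def)
  finally show ?thesis by (simp add: F_def)
qed

lemma measure_pair_pmf_le_sections:
  assumes "\<And>y. measure_pmf.prob p {x. (x, y) \<in> A} \<le> r"
  shows "measure_pmf.prob (pair_pmf p q) A \<le> r"
proof -
  have r: "0 \<le> r" using assms[of undefined] measure_nonneg order_trans by blast
  have "emeasure (pair_pmf p q) A = emeasure (pair_pmf q p) ((\<lambda>(x, y). (y, x)) -` A)"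
    by (subst pair_commute_pmf) simp
  also have "\<dots> = (\<integral>\<^sup>+y. \<integral>\<^sup>+x. indicator ((\<lambda>(x, y). (y, x)) -` A) (y, x) \<partial>p \<partial>q)"
    by (simp add: nn_integral_indicator[symmetric] nn_integral_pair_pmf' del: nn_integral_indicator)
  also have "\<dots> = (\<integral>\<^sup>+y. emeasure p {x. (x, y) \<in> A} \<partial>q)"
    by (intro nn_integral_cong) (simp add: nn_integral_indicator[symmetric] indicator_def del: nn_integral_indicator)
  also have "\<dots> \<le> (\<integral>\<^sup>+y. ennreal r \<partial>q)"
    using assms by (intro nn_integral_mono) (simp add: measure_pmf.emeasure_eq_measure ennreal_leI)
  also have "\<dots> = ennreal r" by (simp add: measure_pmf.emeasure_space_1)
  finally show ?thesis using r by (simp add: measure_pmf.emeasure_eq_measure)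
qed

lemma measure_pair_pmf_snd: "measure_pmf.prob (pair_pmf p q) {z. snd z \<in> B} = measure_pmf.prob q B"
proof -
  have "measure_pmf.prob q B = measure_pmf.prob (map_pmf snd (pair_pmf p q)) B"
    by (simp add: map_snd_pair_pmf)
  then show ?thesis by (simp add: vimage_def)
qed

section \<open>Numerical estimates\<close>

lemma const_C4_le:
  assumes "0 < c" "c < 1"
  shows "const_C4 c \<le> c ^ 6 / 432" "const_C4 c \<le> c\<^sup>2 / 18"
  using assms unfolding const_C4_def const_C2_def
  by (auto simp: min_def power_numeral_reduce field_simps intro: mult_left_mono)

lemma const_C4_mult_le:
  assumes "0 < c" "c < 1" "0 \<le> Z" "1 \<le> N"
  shows "const_C4 c * Z \<le> c ^ 4 * N * Z / 432"
proof -
  have "const_C4 c * Z \<le> c ^ 6 / 432 * Z"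
    using const_C4_le(1)[OF assms(1,2)] assms(3) by (intro mult_right_mono) auto
  also have "\<dots> \<le> c ^ 4 / 432 * (N * Z)"
  proof (rule mult_mono)
    show "c ^ 6 / 432 \<le> c ^ 4 / 432" using assms by (simp add: power_decreasing)
    show "Z \<le> N * Z" using mult_right_mono[of 1 N Z] assms by simp
  qed (use assms in auto)
  finally show ?thesis by (simp add: mult_ac)
qed

lemma const_C3_bound:
  assumes c: "0 < c"
  shows "576 / c ^ 6 + 8640 / c\<^sup>2 \<le> c ^ 4 * (6 * const_C3 c / c)\<^sup>2"
proof -
  define a where "a = 4 / c ^ 4"
  have a: "a \<ge> 0" using c by (simp add: a_def)
  have "a + 30 \<le> const_C3 c" by (simp add: a_def const_C3_def)
  then have "(a + 30)\<^sup>2 \<le> (const_C3 c)\<^sup>2" using a by (intro power_mono) auto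
  moreover have "(a + 30)\<^sup>2 = a\<^sup>2 + 60 * a + 900" "a\<^sup>2 = 16 / c ^ 8"
    by (simp_all add: power2_eq_square algebra_simps a_def power_mult[symmetric])
  then have "16 / c ^ 8 + 240 / c ^ 4 \<le> (a + 30)\<^sup>2" by (simp add: a_def)
  ultimately have "36 * c\<^sup>2 * (16 / c ^ 8 + 240 / c ^ 4) \<le> 36 * c\<^sup>2 * (const_C3 c)\<^sup>2"
    by (intro mult_left_mono) auto
  moreover have "36 * c\<^sup>2 * (16 / c ^ 8 + 240 / c ^ 4) = 576 / c ^ 6 + 8640 / c\<^sup>2"
    "c ^ 4 * (6 * const_C3 c / c)\<^sup>2 = 36 * c\<^sup>2 * (const_C3 c)\<^sup>2"
    using c by (simp_all add: power2_eq_square power_numeral_reduce field_simps)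
  ultimately show ?thesis by simp
qed

lemma sample_size_condition_bounds:
  fixes c L Z :: real
  assumes c: "0 < c" "c < 1" and L: "1 / 2 \<le> L" and Z: "(6 * const_C3 c / c)\<^sup>2 * L < Z"
  shows "L + 9 + 2 / c\<^sup>2 \<le> c ^ 4 * Z / 200" "1 \<le> Z"
proof -
  have c6: "1 \<le> 1 / c ^ 6" "1 \<le> 1 / c\<^sup>2" using c by (simp_all add: power_le_one)
  have "(576 / c ^ 6 + 8640 / c\<^sup>2) * L \<le> c ^ 4 * ((6 * const_C3 c / c)\<^sup>2 * L)"
    using const_C3_bound[OF c(1)] L by (simp add: mult.assoc[symmetric] mult_right_mono)
  also have "\<dots> \<le> c ^ 4 * Z" using Z c by (simp add: less_imp_le)
  finally have cZ: "(576 / c ^ 6 + 8640 / c\<^sup>2) * L \<le> c ^ 4 * Z" .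
  have "576 * L \<le> 576 / c ^ 6 * L" using mult_right_mono[OF c6(1), of "576 * L"] L by simp
  moreover have "4320 / c\<^sup>2 \<le> 8640 / c\<^sup>2 * L" using L c by (simp add: field_simps)
  ultimately show bound: "L + 9 + 2 / c\<^sup>2 \<le> c ^ 4 * Z / 200"
    using cZ L c6 by (simp add: algebra_simps)
  have "0 < c ^ 4 * Z" using bound L c6 by linarith
  then have "0 \<le> Z" using c by (simp add: zero_less_mult_iff)
  then have "c ^ 4 * Z \<le> Z"
    using c by (intro mult_left_le_one_le) (auto simp: power_le_one)
  with bound L c6 show "1 \<le> Z" by simp
qed

lemma ln_two_ge_half: "1 / 2 \<le> ln (2::real)"
  using ln_le_minus_one[of "1 / 2 :: real"] by (simp add: ln_div)

lemma ln_inverse_mesh_le: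
  fixes c \<epsilon> N :: real
  assumes c: "0 < c" "c < 1" and \<epsilon>: "0 < \<epsilon>" and N: "1 \<le> N" and "1 / N \<le> \<epsilon>\<^sup>2"
  shows "ln (168 * sqrt N / (\<epsilon> * c\<^sup>2)) \<le> 8 + ln N + 2 / c\<^sup>2"
proof -
  have "ln 168 \<le> ln (2 ^ 8 :: real)" by simp
  also have "\<dots> \<le> 8" using ln_le_minus_one[of "2::real"] ln_realpow[of "2::real" 8] by simp
  finally have l168: "ln 168 \<le> (8 :: real)" .
  have "- ln N \<le> 2 * ln \<epsilon>"
    using ln_mono[OF assms(5)] N \<epsilon> by (simp add: ln_div ln_realpow)
  moreover have "- ln c \<le> 1 / c\<^sup>2"
  proof -
    have "- ln c \<le> 1 / c - 1" using ln_le_minus_one[of "1 / c"] c by (simp add: ln_div)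
    moreover have "1 / c \<le> 1 / c\<^sup>2"
      using c by (intro divide_left_mono) (auto simp: power2_eq_square mult_left_le_one_le)
    ultimately show ?thesis by linarith
  qed
  moreover have "ln (168 * sqrt N / (\<epsilon> * c\<^sup>2)) = ln 168 + ln N / 2 - ln \<epsilon> - 2 * ln c"
    using c \<epsilon> N by (simp add: ln_div ln_mult_pos ln_sqrt ln_realpow)
  ultimately show ?thesis using l168 by linarith
qed

lemma grid_side_le:
  assumes "0 < h" "h \<le> 1"
  shows "real (nat (2 * (\<lceil>1 / h\<rceil> + 1) + 1)) \<le> 7 / h"
proof -
  have "0 < 1 / h" using assms by simp
  then have "0 \<le> \<lceil>1 / h\<rceil>" by (metis ceiling_mono ceiling_zero less_eq_real_def)
  then have "0 \<le> 2 * (\<lceil>1 / h\<rceil> + 1) + 1" by simp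
  then have "real (nat (2 * (\<lceil>1 / h\<rceil> + 1) + 1)) = 2 * (of_int \<lceil>1 / h\<rceil> + 1) + 1"
    by simp
  also have "\<dots> \<le> 2 * (1 / h) + 5" using of_int_ceiling_le_add_one[of "1 / h"] by (smt (verit))
  also have "\<dots> \<le> 7 / h" using assms by (simp add: field_simps)
  finally show ?thesis .
qed

lemma sum_mult_min_le:
  fixes n m :: nat
  shows "real (m + n) * real (min m n) \<le> 2 * real n * real m"
proof (cases "m \<le> n")
  case True
  then have "real m * real m \<le> real m * real n" by (intro mult_left_mono) auto
  then show ?thesis using True by (simp add: min_def algebra_simps)
next
  case False
  then have "real n * real n \<le> real n * real m" by (intro mult_left_mono) auto
  then show ?thesis using False by (simp add: min_def algebra_simps)
qed

lemma grid_count_le_exp: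
  fixes c \<epsilon> h :: real and d :: nat
  assumes c: "0 < c" "c < 1" and \<epsilon>: "0 < \<epsilon>" "\<epsilon> * c\<^sup>2 \<le> 1" and d: "1 / real d \<le> \<epsilon>\<^sup>2" "0 < d"
    and h: "h = \<epsilon> * c\<^sup>2 / 24 / sqrt (real d)"
  shows "real (nat (2 * (\<lceil>1 / h\<rceil> + 1) + 1)) ^ d \<le> exp (real d * (8 + ln (real d) + 2 / c\<^sup>2))"
proof -
  have ch: "0 < \<epsilon> * c\<^sup>2" using c \<epsilon> by simp
  have "1 \<le> sqrt (real d)" using d by simp
  then have "h \<le> \<epsilon> * c\<^sup>2 / 24 / 1"
    unfolding h using ch by (intro divide_left_mono) auto
  then have "h \<le> 1" using \<epsilon>(2) by simp
  moreover have "0 < h" unfolding h using ch d by simp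
  ultimately have h_pos: "0 < h" "h \<le> 1" by simp_all
  have h_inv: "7 / h = 168 * sqrt (real d) / (\<epsilon> * c\<^sup>2)"
    using ch h_pos by (simp add: h field_simps)
  have "real (nat (2 * (\<lceil>1 / h\<rceil> + 1) + 1)) ^ d \<le> (7 / h) ^ d"
    using grid_side_le[OF h_pos] by (intro power_mono) auto
  also have "\<dots> = exp (real d * ln (7 / h))"
    using exp_of_nat_mult[of d "ln (7 / h)"] h_pos by simp
  also have "\<dots> \<le> exp (real d * (8 + ln (real d) + 2 / c\<^sup>2))"
    using ln_inverse_mesh_le[OF c \<epsilon>(1) _ d(1)] d by (simp add: h_inv mult_left_mono)
  finally show ?thesis .
qed

lemma tail_exponent_ge:
  fixes \<epsilon> c :: real and n m :: nat
  assumes ch: "0 < \<epsilon> * c\<^sup>2" "\<epsilon> * c\<^sup>2 \<le> 1"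
  shows "c ^ 4 * real (m + n) * (\<epsilon>\<^sup>2 * real (min m n)) / 128
           \<le> 2 * (\<epsilon> * c\<^sup>2 * sqrt (real n) * sqrt (real m) / 8)\<^sup>2 / (1 + \<epsilon> * c\<^sup>2 / 24) ^ 4"
proof -
  define T where "T = \<epsilon> * c\<^sup>2 * sqrt (real n) * sqrt (real m) / 8"
  have "2 * T\<^sup>2 = \<epsilon>\<^sup>2 * c ^ 4 * (2 * real n * real m) / 64"
    unfolding T_def by (simp add: power2_eq_square power_numeral_reduce field_simps)
  moreover have "\<epsilon>\<^sup>2 * c ^ 4 * (real (m + n) * real (min m n)) \<le> \<epsilon>\<^sup>2 * c ^ 4 * (2 * real n * real m)"
    using sum_mult_min_le[of m n] by (intro mult_left_mono) auto
  ultimately have "c ^ 4 * real (m + n) * (\<epsilon>\<^sup>2 * real (min m n)) / 64 \<le> 2 * T\<^sup>2"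
    by (simp add: mult_ac)
  moreover have "2 * T\<^sup>2 / 2 \<le> 2 * T\<^sup>2 / (1 + \<epsilon> * c\<^sup>2 / 24) ^ 4"
  proof -
    have "(1 + \<epsilon> * c\<^sup>2 / 24) ^ 4 \<le> (1 + 1 / 24 :: real) ^ 4"
      using ch by (intro power_mono) auto
    also have "\<dots> \<le> 2" by (simp add: power_divide)
    finally show ?thesis using ch by (intro divide_left_mono) auto
  qed
  ultimately show ?thesis by (simp add: T_def)
qed

lemma grid_union_bound_le:
  fixes c \<epsilon> h T :: real and n m :: nat
  assumes c: "0 < c" "c < 1" and n: "n > 0" and m: "m > 0" and \<epsilon>: "0 < \<epsilon>" "\<epsilon> < 1"
    and hyp: "\<epsilon>\<^sup>2 * real (min m n) > (6 * const_C3 c / c)\<^sup>2 * ln (real (m + n))"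
    and h: "h = \<epsilon> * c\<^sup>2 / 24 / sqrt (real (m + n))"
    and T: "T = \<epsilon> * c\<^sup>2 * sqrt (real n) * sqrt (real m) / 8"
  shows "real (nat (2 * (\<lceil>1 / h\<rceil> + 1) + 1)) ^ (n + m) * (2 * exp (-2 * T\<^sup>2 / (1 + \<epsilon> * c\<^sup>2 / 24) ^ 4))
           \<le> real (m + n) * exp (- const_C4 c * real (min m n) * \<epsilon>\<^sup>2)"
proof -
  define N s Z where "N = real (m + n)" and "s = real (min m n)" and "Z = \<epsilon>\<^sup>2 * s"
  define X G where "X = c ^ 4 * N * Z" and "G = exp (N * (8 + ln N + 2 / c\<^sup>2))"
  have N: "2 \<le> N" and s: "1 \<le> s" "s \<le> N" using n m by (auto simp: N_def s_def)
  have "ln 2 \<le> ln N" using N by (intro ln_mono) auto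
  then have bounds: "ln N + 9 + 2 / c\<^sup>2 \<le> c ^ 4 * Z / 200" "1 \<le> Z"
    using sample_size_condition_bounds[OF c, of "ln N" Z] ln_two_ge_half hyp
    by (simp_all add: N_def s_def Z_def)
  have "1 / N \<le> 1 / s" using s by (simp add: frac_le)
  also have "1 / s \<le> \<epsilon>\<^sup>2" using bounds(2) s by (simp add: Z_def pos_divide_le_eq)
  finally have "1 / N \<le> \<epsilon>\<^sup>2" .
  have ch: "0 < \<epsilon> * c\<^sup>2" "\<epsilon> * c\<^sup>2 \<le> 1" using c \<epsilon> by (auto intro: mult_le_one simp: power_le_one)
  have grid: "real (nat (2 * (\<lceil>1 / h\<rceil> + 1) + 1)) ^ (n + m) \<le> G"
    using grid_count_le_exp[OF c \<epsilon>(1) ch(2) _ _ h] \<open>1 / N \<le> \<epsilon>\<^sup>2\<close> n by (simp add: G_def N_def add.commute)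
  have "X / 128 \<le> 2 * T\<^sup>2 / (1 + \<epsilon> * c\<^sup>2 / 24) ^ 4"
    using tail_exponent_ge[OF ch, of m n] by (simp add: T X_def N_def s_def Z_def)
  moreover have "const_C4 c * s * \<epsilon>\<^sup>2 \<le> X / 432"
    using const_C4_mult_le[OF c _ , of Z N] bounds(2) N by (simp add: X_def Z_def mult_ac)
  moreover have "N * (8 + ln N + 2 / c\<^sup>2) + ln 2 \<le> X / 200"
    using bounds(1) ln_le_minus_one[of 2] N mult_left_mono[OF bounds(1), of N]
    by (simp add: X_def algebra_simps)
  moreover have "0 \<le> X" using N bounds(2) by (simp add: X_def)
  ultimately have "N * (8 + ln N + 2 / c\<^sup>2) + ln 2 - 2 * T\<^sup>2 / (1 + \<epsilon> * c\<^sup>2 / 24) ^ 4 \<le> - (const_C4 c * s * \<epsilon>\<^sup>2)"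
    by linarith
  moreover have "G * (2 * exp (-2 * T\<^sup>2 / (1 + \<epsilon> * c\<^sup>2 / 24) ^ 4))
      = exp (N * (8 + ln N + 2 / c\<^sup>2) + ln 2 - 2 * T\<^sup>2 / (1 + \<epsilon> * c\<^sup>2 / 24) ^ 4)"
    by (simp add: G_def exp_add exp_diff exp_minus field_simps)
  ultimately have exponent: "G * (2 * exp (-2 * T\<^sup>2 / (1 + \<epsilon> * c\<^sup>2 / 24) ^ 4)) \<le> exp (- (const_C4 c * s * \<epsilon>\<^sup>2))"
    by simp
  have "real (nat (2 * (\<lceil>1 / h\<rceil> + 1) + 1)) ^ (n + m) * (2 * exp (-2 * T\<^sup>2 / (1 + \<epsilon> * c\<^sup>2 / 24) ^ 4))
      \<le> G * (2 * exp (-2 * T\<^sup>2 / (1 + \<epsilon> * c\<^sup>2 / 24) ^ 4))"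
    using grid by (rule mult_right_mono) simp
  also have "\<dots> \<le> exp (- (const_C4 c * s * \<epsilon>\<^sup>2))" by (rule exponent)
  also have "\<dots> \<le> N * exp (- (const_C4 c * s * \<epsilon>\<^sup>2))" using N by simp
  finally show ?thesis by (simp add: N_def s_def)
qed

section \<open>The rank-one model\<close>

lemma rank_one_entries_unit:
  fixes c C :: real
  assumes c: "0 < c" "C < 1" and u: "\<forall>k<n. u k \<in> {c..C}" and v: "\<forall>j<m. v j \<in> {c..C}"
  shows "\<forall>i<n. \<forall>j<m. u i * v j \<in> {0..1}"
proof (intro allI impI)
  fix i j assume "i < n" "j < m"
  then have "c \<le> u i" "u i \<le> C" "c \<le> v j" "v j \<le> C" using u v by auto
  then show "u i * v j \<in> {0..1}" using c by (auto intro: mult_le_one)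
qed

lemma rank_one_spectral_deviation:
  fixes c C \<epsilon> :: real and n m :: nat and u v :: "nat \<Rightarrow> real"
  assumes c: "0 < c" "c < C" "C < 1" and u: "\<forall>k<n. u k \<in> {c..C}" and v: "\<forall>j<m. v j \<in> {c..C}"
    and n: "n > 0" and m: "m > 0" and \<epsilon>: "0 < \<epsilon>" "\<epsilon> < 1"
    and hyp: "\<epsilon>\<^sup>2 * real (min m n) > (6 * const_C3 c / c)\<^sup>2 * ln (real (m + n))"
  shows "measure_pmf.prob (rank_one_pmf n m u v)
           {X. \<not> op_norm_le n m (\<lambda>i j. real_mat X i j - u i * v j) (\<epsilon> * c\<^sup>2 * sqrt (real n) * sqrt (real m) / 4)}
         \<le> real (m + n) * exp (- const_C4 c * real (min m n) * \<epsilon>\<^sup>2)"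
proof -
  define \<delta> h T where "\<delta> = \<epsilon> * c\<^sup>2 / 24" and "h = \<delta> / sqrt (real (m + n))"
    and "T = \<epsilon> * c\<^sup>2 * sqrt (real n) * sqrt (real m) / 8"
  have p: "\<forall>i<n. \<forall>j<m. u i * v j \<in> {0..1}"
    using rank_one_entries_unit[OF c(1,3) u v] .
  have "\<epsilon> * c\<^sup>2 \<le> 1" using c \<epsilon> by (intro mult_le_one) (auto simp: power_le_one)
  then have \<delta>: "0 < \<delta>" "\<delta> \<le> 1"
    using c \<epsilon> by (auto simp: \<delta>_def)
  have h: "0 < h" "h * sqrt (real n) \<le> \<delta>" "h * sqrt (real m) \<le> \<delta>"
    using \<delta> n by (auto simp: h_def field_simps)
  have K: "1 / h + 1 \<le> of_int (\<lceil>1 / h\<rceil> + 1)" by simp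
  have T: "0 < T" using c \<epsilon> n m by (simp add: T_def)
  have threshold: "T + 3 * \<delta> * sqrt (real n) * sqrt (real m) = \<epsilon> * c\<^sup>2 * sqrt (real n) * sqrt (real m) / 4"
    by (simp add: T_def \<delta>_def field_simps)
  have "measure_pmf.prob (rank_one_pmf n m u v)
           {X. \<not> op_norm_le n m (\<lambda>i j. real_mat X i j - u i * v j) (\<epsilon> * c\<^sup>2 * sqrt (real n) * sqrt (real m) / 4)}
      \<le> real (nat (2 * (\<lceil>1 / h\<rceil> + 1) + 1)) ^ (n + m) * (2 * exp (-2 * T\<^sup>2 / (1 + \<delta>) ^ 4))"
    using prob_not_op_norm_le[OF p \<delta> h K T] unfolding threshold rank_one_pmf_eq_bernoulli_matrix_pmf .
  also have "\<dots> \<le> real (m + n) * exp (- const_C4 c * real (min m n) * \<epsilon>\<^sup>2)"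
    using grid_union_bound_le[OF _ _ n m \<epsilon> hyp h_def[unfolded \<delta>_def] T_def] c by (simp add: \<delta>_def)
  finally show ?thesis .
qed

lemma rank_one_row_deviation:
  fixes c C \<epsilon> :: real and n m :: nat and u v w :: "nat \<Rightarrow> real"
  assumes c: "0 < c" "c < C" "C < 1" and u: "\<forall>k<n. u k \<in> {c..C}" and v: "\<forall>j<m. v j \<in> {c..C}"
    and i: "i < n" and \<epsilon>: "0 < \<epsilon>" and w: "vec_norm m w > 0"
  shows "measure_pmf.prob (rank_one_pmf n m u v)
           {X. \<epsilon> * (vec_norm m w * vec_norm m v) / 2 \<le> \<bar>\<Sum>j<m. (real_mat X i j - u i * v j) * w j\<bar>}
         \<le> 2 * exp (- const_C4 c * real (min m n) * \<epsilon>\<^sup>2)"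
proof -
  have "m > 0" using w by (cases m) (simp_all add: vec_norm_def)
  have V: "c * sqrt (real m) \<le> vec_norm m v" using c v by (intro vec_norm_ge_of_entries_ge) auto
  moreover have "0 < c * sqrt (real m)" using c \<open>m > 0\<close> by simp
  ultimately have "0 < vec_norm m v" by linarith
  have p: "\<forall>i<n. \<forall>j<m. u i * v j \<in> {0..1}"
    using rank_one_entries_unit[OF c(1,3) u v] .
  have t: "0 < \<epsilon> * (vec_norm m w * vec_norm m v) / 2" using \<epsilon> w \<open>0 < vec_norm m v\<close> by simp
  have "measure_pmf.prob (rank_one_pmf n m u v)
           {X. \<epsilon> * (vec_norm m w * vec_norm m v) / 2 \<le> \<bar>\<Sum>j<m. (real_mat X i j - u i * v j) * w j\<bar>}
        \<le> 2 * exp (-2 * (\<epsilon> * (vec_norm m w * vec_norm m v) / 2)\<^sup>2 / (vec_norm m w)\<^sup>2)"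
    unfolding rank_one_pmf_eq_bernoulli_matrix_pmf by (rule prob_centered_row_deviation[OF p t i])
  also have "-2 * (\<epsilon> * (vec_norm m w * vec_norm m v) / 2)\<^sup>2 / (vec_norm m w)\<^sup>2 = - (\<epsilon>\<^sup>2 * (vec_norm m v)\<^sup>2 / 2)"
    using w by (simp add: power2_eq_square field_simps)
  also have "const_C4 c * real (min m n) * \<epsilon>\<^sup>2 \<le> \<epsilon>\<^sup>2 * (vec_norm m v)\<^sup>2 / 2"
  proof -
    have "const_C4 c * real (min m n) \<le> c\<^sup>2 / 18 * real m"
      using const_C4_le(2)[of c] c by (intro mult_mono) auto
    also have "\<dots> \<le> (vec_norm m v)\<^sup>2 / 2"
    proof -
      have "real m * c\<^sup>2 \<le> (vec_norm m v)\<^sup>2"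
        using power_mono[OF V, of 2] c by (simp add: power_mult_distrib mult.commute)
      moreover have "c\<^sup>2 / 18 * real m = real m * c\<^sup>2 / 18" by simp
      moreover have "0 \<le> real m * c\<^sup>2" by simp
      ultimately show ?thesis by linarith
    qed
    finally have "const_C4 c * real (min m n) * \<epsilon>\<^sup>2 \<le> (vec_norm m v)\<^sup>2 / 2 * \<epsilon>\<^sup>2"
      by (rule mult_right_mono) simp
    then show ?thesis by (simp add: algebra_simps)
  qed
  then have "exp (- (\<epsilon>\<^sup>2 * (vec_norm m v)\<^sup>2 / 2)) \<le> exp (- const_C4 c * real (min m n) * \<epsilon>\<^sup>2)"
    by simp
  finally show ?thesis by simp
qed

lemma rank_one_estimate_error_imp:
  fixes c C \<epsilon> :: real and u u' v w :: "nat \<Rightarrow> real" and X X' :: "nat \<times> nat \<Rightarrow> bool"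
  assumes c: "0 < c" "C < 1" and u: "\<forall>k<n. u k \<in> {c..C}" and u': "\<forall>k<n. u' k \<in> {c..C}"
    and v: "\<forall>j<m. v j \<in> {c..C}" and i: "i < n" and \<epsilon>: "0 < \<epsilon>"
    and F: "op_norm_le n m (\<lambda>i j. real_mat X' i j - u' i * v j) (\<epsilon> * c\<^sup>2 * sqrt (real n) * sqrt (real m) / 4)"
    and lead: "leading_right_sv n m (real_mat X') w" and aligned: "vec_inner m w v \<ge> 0"
    and err: "\<epsilon> < \<bar>(\<Sum>j<m. real_mat X i j * w j) / (vec_norm m w * vec_norm m v) - u i\<bar>"
  shows "\<epsilon> * (vec_norm m w * vec_norm m v) / 2 \<le> \<bar>\<Sum>j<m. (real_mat X i j - u i * v j) * w j\<bar>"
proof -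
  have "0 < n" "0 < m" using i lead by (auto simp: leading_right_sv_def)
  then have cn: "0 < c * sqrt (real n)" "0 < c * sqrt (real m)" using c by auto
  have U: "c * sqrt (real n) \<le> vec_norm n u'" and V: "c * sqrt (real m) \<le> vec_norm m v"
    using c u' v by (auto intro!: vec_norm_ge_of_entries_ge)
  have "\<epsilon> * c\<^sup>2 * sqrt (real n) * sqrt (real m) / 4 = \<epsilon> * (c * sqrt (real n)) * (c * sqrt (real m)) / 4"
    by (simp add: power2_eq_square mult_ac)
  also have "\<dots> \<le> \<epsilon> * vec_norm n u' * vec_norm m v / 4"
    using U V cn \<epsilon> by (intro divide_right_mono mult_mono mult_left_mono) auto
  finally have "op_norm_le n m (\<lambda>i j. real_mat X' i j - u' i * v j) (\<epsilon> * vec_norm n u' * vec_norm m v / 4)"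
    using F op_norm_le_mono by blast
  moreover have "0 < vec_norm n u'" "0 < vec_norm m v" using U V cn by linarith+
  moreover have "0 \<le> u i" "u i \<le> 1" using u i c by auto
  ultimately show ?thesis
    using row_estimate_error_imp_residual[OF _ lead aligned _ _ _ _ err] by blast
qed

theorem mainTheorem6:
  fixes c C :: real and n m :: nat
    and u u' v :: "nat \<Rightarrow> real"
    and vhat :: "(nat \<times> nat \<Rightarrow> bool) \<Rightarrow> nat \<Rightarrow> real"
    and i :: nat and \<epsilon> :: real
  assumes "0 < c" "c < C" "C < 1"
    and "\<forall>k<n. u k \<in> {c..C}" "\<forall>k<n. u' k \<in> {c..C}" "\<forall>j<m. v j \<in> {c..C}"
    and "\<forall>X'. leading_right_sv n m (real_mat X') (vhat X') \<and> vec_inner m (vhat X') v \<ge> 0"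
    and "i < n"
    and "0 < \<epsilon>" "\<epsilon> < 1"
    and "\<epsilon>\<^sup>2 * real (min m n) > (6 * const_C3 c / c)\<^sup>2 * ln (real (m + n))"
  shows "measure_pmf.prob (pair_pmf (rank_one_pmf n m u v) (rank_one_pmf n m u' v))
           {(X, X'). \<bar>(\<Sum>j<m. real_mat X i j * vhat X' j) / (vec_norm m (vhat X') * vec_norm m v) - u i\<bar> > \<epsilon>}
         \<le> real (m + n + 2) * exp (- const_C4 c * real (min m n) * \<epsilon>\<^sup>2)"
proof -
  note c = assms(1-3) and u = assms(4) and u' = assms(5) and v = assms(6) and vhat = assms(7)
    and i = assms(8) and \<epsilon> = assms(9,10) and hyp = assms(11)
  define P Q where "P = rank_one_pmf n m u v" and "Q = rank_one_pmf n m u' v"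
  define E where "E = exp (- const_C4 c * real (min m n) * \<epsilon>\<^sup>2)"
  define Bad where "Bad = {X'. \<not> op_norm_le n m (\<lambda>i j. real_mat X' i j - u' i * v j)
                                 (\<epsilon> * c\<^sup>2 * sqrt (real n) * sqrt (real m) / 4)}"
  define Row where "Row = {(X, X'). \<epsilon> * (vec_norm m (vhat X') * vec_norm m v) / 2
                                     \<le> \<bar>\<Sum>j<m. (real_mat X i j - u i * v j) * vhat X' j\<bar>}"
  have residual: "X' \<in> Bad \<or> (X, X') \<in> Row"
    if "\<epsilon> < \<bar>(\<Sum>j<m. real_mat X i j * vhat X' j) / (vec_norm m (vhat X') * vec_norm m v) - u i\<bar>" for X X'
    using rank_one_estimate_error_imp[OF c(1,3) u u' v i \<epsilon>(1) _ _ _ that] vhat by (auto simp: Bad_def Row_def)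
  have "{(X, X'). \<bar>(\<Sum>j<m. real_mat X i j * vhat X' j) / (vec_norm m (vhat X') * vec_norm m v) - u i\<bar> > \<epsilon>}
        \<subseteq> {z. snd z \<in> Bad} \<union> Row"
    by (auto dest: residual)
  then have "measure_pmf.prob (pair_pmf P Q) {(X, X'). \<bar>(\<Sum>j<m. real_mat X i j * vhat X' j) / (vec_norm m (vhat X') * vec_norm m v) - u i\<bar> > \<epsilon>}
        \<le> measure_pmf.prob (pair_pmf P Q) ({z. snd z \<in> Bad} \<union> Row)"
    by (intro measure_pmf.finite_measure_mono) auto
  also have "\<dots> \<le> measure_pmf.prob (pair_pmf P Q) {z. snd z \<in> Bad} + measure_pmf.prob (pair_pmf P Q) Row"
    by (rule measure_Un_le) auto
  also have "measure_pmf.prob (pair_pmf P Q) {z. snd z \<in> Bad} \<le> real (m + n) * E"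
    using rank_one_spectral_deviation[OF c u' v _ _ \<epsilon> hyp] i vhat
    unfolding measure_pair_pmf_snd Q_def Bad_def E_def by (force simp: leading_right_sv_def)
  also have "measure_pmf.prob (pair_pmf P Q) Row \<le> 2 * E"
  proof (rule measure_pair_pmf_le_sections)
    fix X'
    show "measure_pmf.prob P {X. (X, X') \<in> Row} \<le> 2 * E"
      using rank_one_row_deviation[OF c u v i \<epsilon>(1) leading_right_sv_vec_norm_pos[OF conjunct1[OF vhat[rule_format]]]]
      by (simp add: P_def E_def Row_def)
  qed
  finally show ?thesis by (simp add: P_def Q_def E_def algebra_simps)
qed

end
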